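(* Let $\alpha\ge 2$ be a real number, and let $Q_n=\widehat{P}_n/P_n$ (for $n\ge1$) be as defined in the context. Then the sequence $(Q_n)$ converges to some real number $r_1>1$, and it oscillates around this limit: there are arbitrarily large integers $n$ with $Q_n>r_1$, and arbitrarily large integers $n$ with $Q_n<r_1$.
   Context: For a real number $\alpha\ge 1$, define the integer sequence $(P_i)_{i\ge 0}=(P^\alpha_i)$ by $P_0=0$, $P_1=1$, and for $k\ge 1$, $P_{k+1}=P_k+P_j$, where $j\ge 1$ is the unique index with $\alpha P_{j-1}<P_k\le \alpha P_j$. For $i\ge 1$, the window of $P_i$ is $W_\alpha(P_i)=\{P_j : \alpha P_{i-1}<P_j\le \alpha P_i\}$. Let $\widehat{P}_i$ be the smallest term of the sequence $(P_m)$ that is greater than $\max W_\alpha(P_i)$ (equivalently $\widehat P_i=P_{j+1}$ where $P_j=\max W_\alpha(P_i)$), and set $Q_i=\widehat{P}_i/P_i$. *)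

theory Defs
  imports Complex_Main
begin

text \<open>P_0 = 0, P_1 = 1, P_(k+1) = P_k + P_j where j >= 1 is the unique index with
  a * P_(j-1) < P_k <= a * P_j (such j necessarily satisfies j <= k).\<close>
fun Pl :: "real \<Rightarrow> nat \<Rightarrow> nat list" where
  "Pl a 0 = [0]"
| "Pl a (Suc 0) = [0, 1]"
| "Pl a (Suc (Suc k)) =
     (let xs = Pl a (Suc k); pk = xs ! Suc k;
          j = (THE j. 1 \<le> j \<and> j \<le> Suc k \<and> a * real (xs ! (j - 1)) < real pk
                     \<and> real pk \<le> a * real (xs ! j))
      in xs @ [pk + xs ! j])"

definition P :: "real \<Rightarrow> nat \<Rightarrow> nat" where
  "P a n = Pl a n ! n"

definition window :: "real \<Rightarrow> nat \<Rightarrow> nat set" where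
  "window a i = {P a j | j. a * real (P a (i - 1)) < real (P a j) \<and> real (P a j) \<le> a * real (P a i)}"

definition Phat :: "real \<Rightarrow> nat \<Rightarrow> nat" where
  "Phat a i = (LEAST m. m \<in> range (P a) \<and> Max (window a i) < m)"

definition Q :: "real \<Rightarrow> nat \<Rightarrow> real" where
  "Q a i = real (Phat a i) / real (P a i)"

end

theory Submission
  imports Defs
begin

(* Write P_(k+1) = P_k + P_j(k). The lag k - j(k) is nondecreasing and bounded by alpha^2, so it
   is eventually a constant d, and d >= 1 when alpha >= 2. From then on the window of P_i ends at
   P_(i+d), so Q_i = 1 + P_(i+d) / P_i, and P satisfies u_(n+d+1) = u_(n+d) + u_n.
   If theta > 1 is the root of theta^(d+1) = theta^d + 1, each term of u_n / theta^n is a convex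
   combination of two earlier ones, so it converges to a positive limit and P_(i+d) / P_i tends
   to theta^d. With R_n = u_(n+d) / u_n and r_n = u_(n+1) / u_n one has R_n = r_n ... r_(n+d-1)
   and r_(n+d) = 1 + 1 / R_n; if R stayed on one side of theta^d it would therefore be eventually
   equal to theta^d, making theta = r_(n+d) rational, which the rational root theorem excludes. *)

section \<open>Delayed averages\<close>

locale delayed_average =
  fixes x :: "nat \<Rightarrow> real" and a b :: real and d :: nat
  assumes x_pos: "0 < x n"
    and a_pos: "0 < a" and b_pos: "0 < b" and a_plus_b: "a + b = 1"
    and x_rec: "x (n + d + 1) = a * x (n + d) + b * x n"
begin

definition lo :: "nat \<Rightarrow> real" where
  "lo n = Min (x ` {n..n + d})"

definition hi :: "nat \<Rightarrow> real" where
  "hi n = Max (x ` {n..n + d})"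

lemma lo_le: "n \<le> k \<Longrightarrow> k \<le> n + d \<Longrightarrow> lo n \<le> x k"
  unfolding lo_def by (rule Min_le) auto

lemma le_hi: "n \<le> k \<Longrightarrow> k \<le> n + d \<Longrightarrow> x k \<le> hi n"
  unfolding hi_def by (rule Max_ge) auto

lemma x_rec_minus: "x (n + d + 1) - c = a * (x (n + d) - c) + b * (x n - c)"
proof -
  have "(a + b) * c = c"
    using a_plus_b by simp
  with x_rec[of n] show ?thesis
    by (simp add: algebra_simps)
qed

lemma incseq_lo: "incseq lo"
proof (rule incseq_SucI)
  fix n
  have "lo n \<le> x k" if "Suc n \<le> k" "k \<le> Suc n + d" for k
  proof (cases "k = n + d + 1")
    case True
    have "0 \<le> a * (x (n + d) - lo n) + b * (x n - lo n)"
      using lo_le[of n n] lo_le[of n "n + d"] a_pos b_pos by simp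
    with True show ?thesis
      using x_rec_minus[of n "lo n"] by simp
  qed (use that lo_le in auto)
  then show "lo n \<le> lo (Suc n)"
    unfolding lo_def[of "Suc n"] by (intro Min.boundedI) auto
qed

lemma decseq_hi: "decseq hi"
proof (rule decseq_SucI)
  fix n
  have "x k \<le> hi n" if "Suc n \<le> k" "k \<le> Suc n + d" for k
  proof (cases "k = n + d + 1")
    case True
    have "a * (x (n + d) - hi n) + b * (x n - hi n) \<le> 0"
      using le_hi[of n n] le_hi[of n "n + d"] a_pos b_pos by (simp add: add_nonpos_nonpos mult_nonneg_nonpos)
    with True show ?thesis
      using x_rec_minus[of n "hi n"] by simp
  qed (use that le_hi in auto)
  then show "hi (Suc n) \<le> hi n"
    unfolding hi_def[of "Suc n"] by (intro Max.boundedI) auto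
qed

lemma lo_le_x: "n \<le> k \<Longrightarrow> lo n \<le> x k"
  using incseqD[OF incseq_lo, of n k] lo_le[of k k] by linarith

lemma x_le_hi: "n \<le> k \<Longrightarrow> x k \<le> hi n"
  using decseqD[OF decseq_hi, of n k] le_hi[of k k] by linarith

lemma excess_propagates:
  assumes "n \<le> j"
  shows "a ^ t * b * (x j - lo n) \<le> x (j + d + 1 + t) - lo n"
proof (induction t)
  case 0
  have "0 \<le> a * (x (j + d) - lo n)"
    using lo_le_x[of n "j + d"] assms a_pos by simp
  then show ?case
    using x_rec_minus[of j "lo n"] by simp
next
  case (Suc t)
  have "0 \<le> b * (x (j + 1 + t) - lo n)"
    using lo_le_x[of n "j + 1 + t"] assms b_pos by simp
  moreover have "a * (a ^ t * b * (x j - lo n)) \<le> a * (x (j + d + 1 + t) - lo n)"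
    using Suc a_pos by simp
  ultimately show ?case
    using x_rec_minus[of "j + 1 + t" "lo n"] by (simp add: algebra_simps)
qed

text \<open>As lo converges, this squeezes hi n - lo n to 0.\<close>
lemma spread_le_lo_increase: "a ^ d * b * (hi n - lo n) \<le> lo (n + 2 * d + 1) - lo n"
proof -
  have "hi n \<in> x ` {n..n + d}"
    unfolding hi_def by (rule Max_in) auto
  then obtain j where j: "n \<le> j" "j \<le> n + d" "x j = hi n"
    by auto
  have "lo n + a ^ d * b * (hi n - lo n) \<le> x k" if "j + d + 1 \<le> k" "k \<le> j + d + 1 + d" for k
  proof -
    define t where "t = k - (j + d + 1)"
    have t: "k = j + d + 1 + t" "t \<le> d"
      using that by (simp_all add: t_def)
    have "a ^ d \<le> a ^ t"
      using t(2) a_pos b_pos a_plus_b by (intro power_decreasing) auto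
    then have "a ^ d * b * (hi n - lo n) \<le> a ^ t * b * (hi n - lo n)"
      using lo_le[of n n] le_hi[of n n] b_pos by (intro mult_right_mono) auto
    then show ?thesis
      using excess_propagates[OF j(1), of t] j(3) t(1) by simp
  qed
  then have "lo n + a ^ d * b * (hi n - lo n) \<le> lo (j + d + 1)"
    unfolding lo_def[of "j + d + 1"] by (intro Min.boundedI) auto
  also have "\<dots> \<le> lo (n + 2 * d + 1)"
    using j(2) by (intro incseqD[OF incseq_lo]) simp
  finally show ?thesis
    by simp
qed

lemma tendsto_pos_limit: "\<exists>l>0. x \<longlonglongrightarrow> l"
proof -
  have "lo n \<le> hi 0" for n
    using lo_le_x[of n n] x_le_hi[of 0 n] by simp
  then obtain l where l: "lo \<longlonglongrightarrow> l"
    using incseq_convergent[OF incseq_lo] by blast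
  define c where "c = a ^ d * b"
  have "0 < c"
    unfolding c_def using a_pos b_pos by simp
  have "(\<lambda>n. hi n - lo n) \<longlonglongrightarrow> 0"
  proof (rule tendsto_sandwich)
    have "lo n \<le> hi n" for n
      using lo_le[of n n] le_hi[of n n] by simp
    then show "\<forall>\<^sub>F n in sequentially. 0 \<le> hi n - lo n"
      by simp
    show "\<forall>\<^sub>F n in sequentially. hi n - lo n \<le> (lo (n + (2 * d + 1)) - lo n) / c"
      using spread_le_lo_increase \<open>0 < c\<close> by (simp add: c_def pos_le_divide_eq mult.commute add.assoc)
    have "(\<lambda>n. (lo (n + (2 * d + 1)) - lo n) / c) \<longlonglongrightarrow> (l - l) / c"
      by (intro tendsto_intros LIMSEQ_ignore_initial_segment l) (use \<open>0 < c\<close> in simp)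
    then show "(\<lambda>n. (lo (n + (2 * d + 1)) - lo n) / c) \<longlonglongrightarrow> 0"
      by simp
  qed simp
  then have "hi \<longlonglongrightarrow> l"
    using tendsto_add[OF l] by fastforce
  then have "x \<longlonglongrightarrow> l"
    using l lo_le_x x_le_hi by (intro tendsto_sandwich[of lo x sequentially hi]) auto
  have "lo 0 \<in> x ` {0..0 + d}"
    unfolding lo_def by (rule Min_in) auto
  then have "0 < lo 0"
    using x_pos by auto
  then have "0 < l"
    using incseq_le[OF incseq_lo l, of 0] by simp
  with \<open>x \<longlonglongrightarrow> l\<close> show ?thesis
    by blast
qed

end

section \<open>The lagged Fibonacci recurrence\<close>

lemma lagged_fibonacci_root_exists: "\<exists>\<theta>::real. 1 < \<theta> \<and> \<theta> ^ (d + 1) = \<theta> ^ d + 1"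
proof -
  define f :: "real \<Rightarrow> real" where "f y = y ^ (d + 1) - y ^ d - 1" for y
  have "\<exists>y\<ge>1. y \<le> 2 \<and> f y = 0"
  proof (rule IVT')
    show "f 1 \<le> 0" "0 \<le> f 2"
      by (simp_all add: f_def)
    show "continuous_on {1..2} f"
      unfolding f_def by (intro continuous_intros)
  qed simp
  then obtain \<theta> where "1 \<le> \<theta>" "f \<theta> = 0"
    by blast
  moreover have "\<theta> \<noteq> 1"
    using \<open>f \<theta> = 0\<close> by (auto simp: f_def)
  ultimately show ?thesis
    by (intro exI[of _ \<theta>]) (simp add: f_def)
qed

lemma lagged_fibonacci_root_irrational:
  fixes \<theta> :: real
  assumes "1 \<le> d" "0 < \<theta>" "\<theta> ^ (d + 1) = \<theta> ^ d + 1"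
  shows "\<theta> \<notin> \<rat>"
proof
  assume "\<theta> \<in> \<rat>"
  then obtain m n :: nat where mn: "n \<noteq> 0" "\<bar>\<theta>\<bar> = real m / real n" "coprime m n"
    by (rule Rats_abs_nat_div_natE)
  then have m: "real m = \<theta> * real n"
    using assms(2) by simp
  have "real (m ^ (d + 1)) = (\<theta> ^ d + 1) * real n ^ (d + 1)"
    by (simp only: of_nat_power m power_mult_distrib assms(3))
  also have "\<dots> = real (m ^ d * n + n ^ (d + 1))"
    by (simp add: m power_mult_distrib algebra_simps)
  finally have "m ^ (d + 1) = m ^ d * n + n ^ (d + 1)"
    by (simp only: of_nat_eq_iff)
  then have "m dvd m ^ d * n + n ^ (d + 1)"
    by (metis dvd_triv_left power_Suc Suc_eq_plus1)
  moreover have "m dvd m ^ d * n"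
    using assms(1) by simp
  ultimately have "m dvd n ^ (d + 1)"
    by (simp add: dvd_add_right_iff)
  then have "m = 1"
    using coprime_common_divisor_nat[of m "n ^ (d + 1)" m] mn(3) by simp
  then have "\<theta> ^ (d + 1) \<le> \<theta> ^ d"
    using mn assms(2) by (intro power_decreasing) auto
  then show False
    using assms(3) by simp
qed

lemma lagged_fibonacci_ratio_tendsto:
  fixes u :: "nat \<Rightarrow> real" and \<theta> :: real
  assumes pos: "\<And>n. 0 < u n" and rec: "\<And>n. u (n + d + 1) = u (n + d) + u n"
    and \<theta>: "0 < \<theta>" "\<theta> ^ (d + 1) = \<theta> ^ d + 1"
  shows "(\<lambda>n. u (n + d) / u n) \<longlonglongrightarrow> \<theta> ^ d"
proof -
  define x where "x n = u n / \<theta> ^ n" for n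
  interpret delayed_average x "1 / \<theta>" "1 / \<theta> ^ (d + 1)" d
  proof
    show "0 < x n" for n
      using pos \<theta>(1) by (simp add: x_def)
    show "0 < 1 / \<theta>" "0 < 1 / \<theta> ^ (d + 1)"
      using \<theta>(1) by simp_all
    have "1 / \<theta> + 1 / \<theta> ^ (d + 1) = (\<theta> ^ d + 1) / \<theta> ^ (d + 1)"
      using \<theta>(1) by (simp add: field_simps add_pos_pos)
    also have "\<dots> = 1"
      by (subst \<theta>(2)[symmetric]) (use \<theta>(1) in simp)
    finally show "1 / \<theta> + 1 / \<theta> ^ (d + 1) = 1" .
    show "x (n + d + 1) = 1 / \<theta> * x (n + d) + 1 / \<theta> ^ (d + 1) * x n" for n
      using rec[of n] \<theta>(1) by (simp add: x_def field_simps power_add)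
  qed
  obtain l where "0 < l" "x \<longlonglongrightarrow> l"
    using tendsto_pos_limit by blast
  then have "(\<lambda>n. \<theta> ^ d * (x (n + d) / x n)) \<longlonglongrightarrow> \<theta> ^ d * (l / l)"
    by (intro tendsto_intros LIMSEQ_ignore_initial_segment) auto
  moreover have "\<theta> ^ d * (x (n + d) / x n) = u (n + d) / u n" for n
    using pos[of n] \<theta>(1) by (simp add: x_def power_add field_simps)
  ultimately show ?thesis
    using \<open>0 < l\<close> by simp
qed

text \<open>With R_n = u_(n+d) / u_n and r_n = u_(n+1) / u_n: R \<le> \<theta>^d at d consecutive indices
  makes r = 1 + 1/R \<ge> \<theta> at the next d, so their product R is \<ge> \<theta>^d; and symmetrically.\<close>
lemma lagged_fibonacci_ratio_flip:
  fixes u :: "nat \<Rightarrow> real" and \<theta> :: real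
  assumes pos: "\<And>n. 0 < u n" and rec: "\<And>n. u (n + d + 1) = u (n + d) + u n"
    and \<theta>: "0 < \<theta>" "\<theta> ^ (d + 1) = \<theta> ^ d + 1" and "N + d \<le> m"
  shows "(\<forall>n\<ge>N. u (n + d) / u n \<le> \<theta> ^ d) \<Longrightarrow> \<theta> ^ d \<le> u (m + d) / u m"
    and "(\<forall>n\<ge>N. \<theta> ^ d \<le> u (n + d) / u n) \<Longrightarrow> u (m + d) / u m \<le> \<theta> ^ d"
proof -
  define R where "R n = u (n + d) / u n" for n
  define r where "r n = u (Suc n) / u n" for n
  have u_nonzero: "u n \<noteq> 0" for n
    using pos[of n] by simp
  have R_prod: "R m = (\<Prod>i<d. r (m + i))"
    using prod_lessThan_telescope[of d "\<lambda>i. u (m + i)"] u_nonzero by (simp add: R_def r_def add.commute)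
  have r_pos: "0 < r n" for n
    using pos by (simp add: r_def)
  have R_pos: "0 < R n" for n
    using pos by (simp add: R_def)
  have \<theta>_eq: "\<theta> = 1 + 1 / \<theta> ^ d"
    using \<theta> by (simp add: field_simps)
  have r_eq: "r (m + i) = 1 + 1 / R (m + i - d)" for i
    using rec[of "m + i - d"] pos[of "m + i - d"] pos[of "m + i"] \<open>N + d \<le> m\<close>
    by (simp add: r_def R_def field_simps)
  show "\<theta> ^ d \<le> u (m + d) / u m" if "\<forall>n\<ge>N. u (n + d) / u n \<le> \<theta> ^ d"
  proof -
    have "\<theta> \<le> r (m + i)" for i
    proof -
      have "R (m + i - d) \<le> \<theta> ^ d"
        using that[rule_format, of "m + i - d"] \<open>N + d \<le> m\<close> by (simp add: R_def)
      then have "1 / \<theta> ^ d \<le> 1 / R (m + i - d)"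
        using R_pos \<theta>(1) by (intro divide_left_mono) simp_all
      then show ?thesis
        using r_eq[of i] \<theta>_eq by simp
    qed
    then have "(\<Prod>i<d. \<theta>) \<le> R m"
      unfolding R_prod using \<theta>(1) by (intro prod_mono) simp
    then show ?thesis
      by (simp add: R_def)
  qed
  show "u (m + d) / u m \<le> \<theta> ^ d" if "\<forall>n\<ge>N. \<theta> ^ d \<le> u (n + d) / u n"
  proof -
    have "r (m + i) \<le> \<theta>" for i
    proof -
      have "\<theta> ^ d \<le> R (m + i - d)"
        using that[rule_format, of "m + i - d"] \<open>N + d \<le> m\<close> by (simp add: R_def)
      then have "1 / R (m + i - d) \<le> 1 / \<theta> ^ d"
        using R_pos \<theta>(1) by (intro divide_left_mono) simp_all
      then show ?thesis
        using r_eq[of i] \<theta>_eq by simp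
    qed
    then have "R m \<le> (\<Prod>i<d. \<theta>)"
      unfolding R_prod using r_pos by (intro prod_mono) (simp add: less_imp_le)
    then show ?thesis
      by (simp add: R_def)
  qed
qed

lemma lagged_fibonacci_ratio_not_eventually_const:
  fixes u :: "nat \<Rightarrow> nat" and \<theta> :: real
  assumes "1 \<le> d" and pos: "\<And>n. 0 < u n" and rec: "\<And>n. u (n + d + 1) = u (n + d) + u n"
    and \<theta>: "0 < \<theta>" "\<theta> ^ (d + 1) = \<theta> ^ d + 1"
  shows "\<not> (\<forall>n\<ge>N. real (u (n + d)) / real (u n) = \<theta> ^ d)"
proof
  assume "\<forall>n\<ge>N. real (u (n + d)) / real (u n) = \<theta> ^ d"
  then have "real (u (N + d)) / real (u N) = \<theta> ^ d"
    by simp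
  then have "real (u (N + d)) = \<theta> ^ d * real (u N)"
    using pos[of N] by (simp add: field_simps)
  then have "real (u (N + d + 1)) / real (u (N + d)) = 1 + 1 / \<theta> ^ d"
    using rec[of N] pos[of N] \<theta>(1) by (simp add: field_simps)
  also have "\<dots> = \<theta>"
    using \<theta> by (simp add: field_simps)
  finally have "\<theta> \<in> \<rat>"
    by (metis Rats_divide Rats_of_nat)
  with lagged_fibonacci_root_irrational[OF \<open>1 \<le> d\<close>] \<theta> show False
    by simp
qed

lemma lagged_fibonacci_ratio_oscillates:
  fixes u :: "nat \<Rightarrow> nat"
  assumes "1 \<le> d" and pos: "\<And>n. 0 < u n" and rec: "\<And>n. u (n + d + 1) = u (n + d) + u n"
  shows "\<exists>L>0. (\<lambda>n. real (u (n + d)) / real (u n)) \<longlonglongrightarrow> L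
     \<and> (\<forall>N. \<exists>n\<ge>N. L < real (u (n + d)) / real (u n))
     \<and> (\<forall>N. \<exists>n\<ge>N. real (u (n + d)) / real (u n) < L)"
proof -
  define R where "R n = real (u (n + d)) / real (u n)" for n
  obtain \<theta> :: real where \<theta>: "1 < \<theta>" "\<theta> ^ (d + 1) = \<theta> ^ d + 1"
    using lagged_fibonacci_root_exists by blast
  have pos': "0 < real (u n)" and rec': "real (u (n + d + 1)) = real (u (n + d)) + real (u n)" for n
    using pos rec by simp_all
  have "0 < \<theta>"
    using \<theta>(1) by simp
  note flip = lagged_fibonacci_ratio_flip[OF pos' rec' \<open>0 < \<theta>\<close> \<theta>(2), folded R_def]
  have not_eventually_const: "\<not> (\<forall>n\<ge>N. R n = \<theta> ^ d)" for N
    using lagged_fibonacci_ratio_not_eventually_const[OF \<open>1 \<le> d\<close> pos rec \<open>0 < \<theta>\<close> \<theta>(2)]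
    unfolding R_def by blast
  have "\<exists>n\<ge>N. \<theta> ^ d < R n" for N
  proof (rule ccontr)
    assume "\<not> (\<exists>n\<ge>N. \<theta> ^ d < R n)"
    then have "\<forall>n\<ge>N. R n \<le> \<theta> ^ d"
      by auto
    with flip(1)[of N] have "\<forall>n\<ge>N + d. R n = \<theta> ^ d"
      by (auto intro: antisym)
    with not_eventually_const show False
      by blast
  qed
  moreover have "\<exists>n\<ge>N. R n < \<theta> ^ d" for N
  proof (rule ccontr)
    assume "\<not> (\<exists>n\<ge>N. R n < \<theta> ^ d)"
    then have "\<forall>n\<ge>N. \<theta> ^ d \<le> R n"
      by auto
    with flip(2)[of N] have "\<forall>n\<ge>N + d. R n = \<theta> ^ d"
      by (auto intro: antisym)
    with not_eventually_const show False
      by blast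
  qed
  moreover have "R \<longlonglongrightarrow> \<theta> ^ d"
    unfolding R_def using lagged_fibonacci_ratio_tendsto[OF pos' rec' \<open>0 < \<theta>\<close> \<theta>(2)] .
  ultimately show ?thesis
    using \<theta>(1) unfolding R_def by (intro exI[of _ "\<theta> ^ d"]) auto
qed

section \<open>The sequence P\<close>

lemma Pl_Suc: "\<exists>y. Pl a (Suc n) = Pl a n @ [y]"
  by (cases n) (auto simp: Let_def)

lemma length_Pl [simp]: "length (Pl a n) = Suc n"
proof (induction n)
  case (Suc n)
  then show ?case
    using Pl_Suc[of a n] by auto
qed simp

lemma nth_Pl: "m \<le> n \<Longrightarrow> Pl a n ! m = P a m"
proof (induction n)
  case (Suc n)
  obtain y where y: "Pl a (Suc n) = Pl a n @ [y]"
    using Pl_Suc by blast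
  show ?case
  proof (cases "m = Suc n")
    case False
    with Suc y show ?thesis
      by (simp add: nth_append)
  qed (simp add: P_def)
qed (simp add: P_def)

lemma P_0 [simp]: "P a 0 = 0" and P_1 [simp]: "P a (Suc 0) = 1"
  by (simp_all add: P_def)

lemma P_Suc_Suc_unfold:
  "P a (Suc (Suc k)) = P a (Suc k) + Pl a (Suc k) ! (THE j. 1 \<le> j \<and> j \<le> Suc k
      \<and> a * real (Pl a (Suc k) ! (j - 1)) < real (Pl a (Suc k) ! Suc k)
      \<and> real (Pl a (Suc k) ! Suc k) \<le> a * real (Pl a (Suc k) ! j))"
  by (simp add: P_def Let_def nth_append)

lemma mono_P: "mono (P a)"
  unfolding mono_iff_le_Suc
proof
  show "P a k \<le> P a (Suc k)" for k
    by (cases k) (simp_all only: P_Suc_Suc_unfold P_0 le_add1 le0)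
qed

lemma P_pos: "1 \<le> k \<Longrightarrow> 0 < P a k"
  using monoD[OF mono_P, of 1 k a] by simp

text \<open>The index j of the recursion for P_(k+1): the one whose window contains P_k.\<close>
definition window_index :: "real \<Rightarrow> nat \<Rightarrow> nat" where
  "window_index a k = (THE j. 1 \<le> j \<and> a * real (P a (j - 1)) < real (P a k)
                          \<and> real (P a k) \<le> a * real (P a j))"

lemma window_index_eqI:
  assumes "0 \<le> a" "1 \<le> j" "a * real (P a (j - 1)) < real (P a k)" "real (P a k) \<le> a * real (P a j)"
  shows "window_index a k = j"
proof -
  have not_less: "\<not> i < i'"
    if "1 \<le> i'" "a * real (P a (i' - 1)) < real (P a k)" "real (P a k) \<le> a * real (P a i)" for i i'
  proof
    assume "i < i'"
    then have "a * real (P a i) \<le> a * real (P a (i' - 1))"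
      using \<open>0 \<le> a\<close> by (intro mult_left_mono) (auto intro: monoD[OF mono_P])
    with that show False by linarith
  qed
  show ?thesis
    unfolding window_index_def
  proof (rule the_equality)
    fix i assume "1 \<le> i \<and> a * real (P a (i - 1)) < real (P a k) \<and> real (P a k) \<le> a * real (P a i)"
    with assms not_less[of i j] not_less[of j i] show "i = j" by linarith
  qed (use assms in simp)
qed

lemma window_index:
  assumes "1 \<le> a" "1 \<le> k"
  shows "1 \<le> window_index a k" "window_index a k \<le> k"
    "a * real (P a (window_index a k - 1)) < real (P a k)"
    "real (P a k) \<le> a * real (P a (window_index a k))"
proof -
  define j where "j = (LEAST j. real (P a k) \<le> a * real (P a j))"
  have Pk: "real (P a k) \<le> a * real (P a k)"
    using mult_right_mono[OF assms(1), of "real (P a k)"] by simp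
  have j: "real (P a k) \<le> a * real (P a j)" "j \<le> k"
    unfolding j_def using Pk by (rule LeastI, rule Least_le)
  have "j \<noteq> 0"
    using j(1) P_pos[OF assms(2), of a] by (cases j) auto
  moreover have "\<not> real (P a k) \<le> a * real (P a (j - 1))"
    unfolding j_def by (rule not_less_Least) (use \<open>j \<noteq> 0\<close> j_def in simp)
  ultimately have "window_index a k = j" "1 \<le> j" "a * real (P a (j - 1)) < real (P a k)"
    using assms(1) j(1) by (auto intro: window_index_eqI)
  with j show "1 \<le> window_index a k" "window_index a k \<le> k"
    "a * real (P a (window_index a k - 1)) < real (P a k)"
    "real (P a k) \<le> a * real (P a (window_index a k))"
    by simp_all
qed

lemma P_Suc:
  assumes "1 \<le> a" "1 \<le> k"
  shows "P a (Suc k) = P a k + P a (window_index a k)"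
proof -
  obtain k' where k': "k = Suc k'"
    using assms(2) by (cases k) auto
  have "(THE j. 1 \<le> j \<and> j \<le> Suc k'
          \<and> a * real (Pl a (Suc k') ! (j - 1)) < real (Pl a (Suc k') ! Suc k')
          \<and> real (Pl a (Suc k') ! Suc k') \<le> a * real (Pl a (Suc k') ! j))
        = window_index a k"
  proof (rule the_equality)
    show "1 \<le> window_index a k \<and> window_index a k \<le> Suc k'
          \<and> a * real (Pl a (Suc k') ! (window_index a k - 1)) < real (Pl a (Suc k') ! Suc k')
          \<and> real (Pl a (Suc k') ! Suc k') \<le> a * real (Pl a (Suc k') ! window_index a k)"
      using window_index[OF assms] by (simp add: k' nth_Pl)
  next
    fix j
    assume j: "1 \<le> j \<and> j \<le> Suc k'
          \<and> a * real (Pl a (Suc k') ! (j - 1)) < real (Pl a (Suc k') ! Suc k')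
          \<and> real (Pl a (Suc k') ! Suc k') \<le> a * real (Pl a (Suc k') ! j)"
    then have "Pl a (Suc k') ! (j - 1) = P a (j - 1)" "Pl a (Suc k') ! j = P a j"
      by (auto intro: nth_Pl)
    with j show "j = window_index a k"
      using assms(1) by (intro window_index_eqI[symmetric]) (simp_all add: k' nth_Pl)
  qed
  then show ?thesis
    using window_index(2)[OF assms] by (simp add: k' P_Suc_Suc_unfold nth_Pl)
qed

lemma strict_mono_P:
  assumes "1 \<le> a"
  shows "strict_mono (P a)"
  unfolding strict_mono_Suc_iff
proof
  show "P a k < P a (Suc k)" for k
    using P_Suc[OF assms, of k] P_pos[OF window_index(1)[OF assms], of k a] by (cases k) auto
qed

lemma window_index_Suc_le:
  assumes "1 \<le> a" "1 \<le> k"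
  shows "window_index a (Suc k) \<le> Suc (window_index a k)"
proof -
  define j where "j = window_index a k"
  have "1 \<le> j"
    using window_index(1)[OF assms] by (simp add: j_def)
  have "real (P a (Suc k)) = real (P a k) + real (P a j)"
    using P_Suc[OF assms] by (simp add: j_def)
  also have "\<dots> \<le> a * real (P a j) + a * real (P a (window_index a j))"
    using window_index(4)[OF assms] window_index(4)[OF assms(1) \<open>1 \<le> j\<close>] by (simp add: j_def)
  also have "\<dots> = a * real (P a (Suc j))"
    using P_Suc[OF assms(1) \<open>1 \<le> j\<close>] by (simp add: algebra_simps)
  finally have "a * real (P a (window_index a (Suc k) - 1)) < a * real (P a (Suc j))"
    using window_index(3)[OF assms(1), of "Suc k"] by simp
  then have "P a (window_index a (Suc k) - 1) < P a (Suc j)"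
    using assms(1) by simp
  then show ?thesis
    using strict_mono_less[OF strict_mono_P[OF assms(1)]] by (simp add: j_def)
qed

lemma P_add_ge:
  assumes "1 \<le> a" "1 \<le> k"
  shows "(1 + 1 / a) ^ t * real (P a k) \<le> real (P a (k + t))"
proof (induction t)
  case (Suc t)
  have "real (P a (k + t)) / a \<le> real (P a (window_index a (k + t)))"
    using window_index(4)[OF assms(1), of "k + t"] assms by (simp add: divide_le_eq mult.commute)
  then have "(1 + 1 / a) * real (P a (k + t)) \<le> real (P a (Suc (k + t)))"
    using P_Suc[OF assms(1), of "k + t"] assms(2) by (simp add: algebra_simps)
  moreover have "(1 + 1 / a) ^ Suc t * real (P a k) \<le> (1 + 1 / a) * real (P a (k + t))"
    using Suc assms(1) by (simp add: mult.assoc mult_left_mono)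
  ultimately show ?case
    by simp
qed simp

lemma lag_le_square:
  assumes "1 \<le> a" "1 \<le> k"
  shows "real (k - window_index a k) \<le> a * a"
proof -
  define j where "j = window_index a k"
  define t where "t = k - j"
  have "1 \<le> j" "k = j + t"
    using window_index(1,2)[OF assms] by (simp_all add: j_def t_def)
  have "0 \<le> 1 / a"
    using assms(1) by simp
  then have "1 + real t * (1 / a) \<le> (1 + 1 / a) ^ t"
    by (intro Bernoulli_inequality) linarith
  then have "1 + real t / a \<le> (1 + 1 / a) ^ t"
    by simp
  then have "(1 + real t / a) * real (P a j) \<le> (1 + 1 / a) ^ t * real (P a j)"
    by (simp add: mult_right_mono)
  also have "\<dots> \<le> real (P a k)"
    using P_add_ge[OF assms(1) \<open>1 \<le> j\<close>, of t] \<open>k = j + t\<close> by simp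
  also have "\<dots> \<le> a * real (P a j)"
    using window_index(4)[OF assms] by (simp add: j_def)
  finally have "1 + real t / a \<le> a"
    using P_pos[OF \<open>1 \<le> j\<close>, of a] by simp
  then show ?thesis
    using assms(1) by (simp add: t_def j_def field_simps)
qed

lemma window_index_Suc_le_self:
  assumes "2 \<le> a" "1 \<le> k"
  shows "window_index a (Suc k) \<le> k"
proof (rule ccontr)
  assume "\<not> window_index a (Suc k) \<le> k"
  then have "window_index a (Suc k) = Suc k"
    using window_index(2)[of a "Suc k"] assms(1) by simp
  then have "a * real (P a k) < real (P a (Suc k))"
    using window_index(3)[of a "Suc k"] assms(1) by simp
  also have "\<dots> = real (P a k) + real (P a (window_index a k))"
    using P_Suc[of a k] assms by simp
  also have "\<dots> \<le> 2 * real (P a k)"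
    using monoD[OF mono_P window_index(2)[of a k]] assms by simp
  finally show False
    using assms(1) mult_right_mono[OF assms(1), of "real (P a k)"] by simp
qed

lemma bounded_mono_nat_eventually_const:
  fixes f :: "nat \<Rightarrow> nat"
  assumes "mono f" "\<And>n. f n \<le> B"
  shows "\<exists>N. \<forall>n\<ge>N. f n = f N"
proof -
  have "range f \<subseteq> {..B}"
    using assms(2) by auto
  then have fin: "finite (range f)"
    by (rule finite_subset) simp
  have "Max (range f) \<in> range f"
    using fin by (rule Max_in) simp
  then obtain N where N: "Max (range f) = f N"
    by (rule rangeE)
  have "f n = f N" if "N \<le> n" for n
  proof (rule antisym)
    show "f n \<le> f N"
      unfolding N[symmetric] using fin by (rule Max_ge) simp
    show "f N \<le> f n"
      using assms(1) that by (rule monoD)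
  qed
  then show ?thesis
    by blast
qed

lemma eventually_const_lag:
  assumes "2 \<le> a"
  shows "\<exists>d\<ge>1. \<exists>K. \<forall>k\<ge>K. window_index a k + d = k"
proof -
  have a: "1 \<le> a"
    using assms by simp
  text \<open>Shifted by one, so that window_index is only used at positive arguments.\<close>
  define lag where "lag k = Suc k - window_index a (Suc k)" for k
  have "lag k \<le> lag (Suc k)" for k
    using window_index_Suc_le[OF a, of "Suc k"] window_index(2)[OF a, of "Suc k"]
    unfolding lag_def by simp
  then have "mono lag"
    unfolding mono_iff_le_Suc by blast
  moreover have "lag k \<le> nat \<lceil>a * a\<rceil>" for k
    using lag_le_square[OF a, of "Suc k"] unfolding lag_def by linarith
  ultimately obtain N where N: "\<And>n. N \<le> n \<Longrightarrow> lag n = lag N"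
    using bounded_mono_nat_eventually_const by blast
  have "1 \<le> lag N"
    using window_index_Suc_le_self[OF assms, of "Suc N"] N[of "Suc N"] by (simp add: lag_def)
  moreover have "window_index a k + lag N = k" if "Suc N \<le> k" for k
  proof -
    define n where "n = k - 1"
    have "k = Suc n" "N \<le> n"
      using that by (simp_all add: n_def)
    then show ?thesis
      using N[of n] window_index(2)[OF a, of k] by (simp add: lag_def)
  qed
  ultimately show ?thesis
    by blast
qed

lemma Phat_eqI:
  assumes "1 \<le> a" "a * real (P a (i - 1)) < real (P a m)" "real (P a m) \<le> a * real (P a i)"
    and "a * real (P a i) < real (P a (Suc m))"
  shows "Phat a i = P a (Suc m)"
proof -
  have sm: "strict_mono (P a)"
    using strict_mono_P[OF assms(1)] .
  have window_le: "window a i \<subseteq> P a ` {..m}"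
  proof
    fix y assume "y \<in> window a i"
    then obtain j where j: "y = P a j" "real (P a j) \<le> a * real (P a i)"
      unfolding window_def by auto
    with assms(4) have "P a j < P a (Suc m)"
      by simp
    then have "j \<le> m"
      using strict_mono_less[OF sm] by simp
    with j show "y \<in> P a ` {..m}"
      by simp
  qed
  have max: "Max (window a i) = P a m"
  proof (rule Max_eqI)
    show "finite (window a i)"
      using window_le by (rule finite_subset) simp
    show "P a m \<in> window a i"
      unfolding window_def using assms(2,3) by auto
    show "y \<le> P a m" if "y \<in> window a i" for y
      using that window_le monoD[OF mono_P, of _ m a] by auto
  qed
  show ?thesis
    unfolding Phat_def max
  proof (rule Least_equality)
    show "P a (Suc m) \<in> range (P a) \<and> P a m < P a (Suc m)"
      using sm by (simp add: strict_mono_Suc_iff)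
  next
    fix y assume "y \<in> range (P a) \<and> P a m < y"
    then obtain j where "y = P a j" "m < j"
      using strict_mono_less[OF sm] by auto
    then show "P a (Suc m) \<le> y"
      using strict_mono_less_eq[OF sm] by simp
  qed
qed

lemma eventually_lagged_fibonacci:
  assumes "2 \<le> a"
  shows "\<exists>d\<ge>1. \<exists>K\<ge>1. \<forall>i\<ge>K. P a (i + d + 1) = P a (i + d) + P a i
                               \<and> Q a i = 1 + real (P a (i + d)) / real (P a i)"
proof -
  have a: "1 \<le> a"
    using assms by simp
  obtain d K where "1 \<le> d" and K: "\<forall>k\<ge>K. window_index a k + d = k"
    using eventually_const_lag[OF assms] by blast
  have "P a (i + d + 1) = P a (i + d) + P a i \<and> Q a i = 1 + real (P a (i + d)) / real (P a i)"
    if "Suc K \<le> i" for i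
  proof -
    have wi: "window_index a (i + d) = i" "window_index a (Suc (i + d)) = Suc i"
      using K[rule_format, of "i + d"] K[rule_format, of "Suc (i + d)"] that by simp_all
    have rec: "P a (Suc (i + d)) = P a (i + d) + P a i"
      using P_Suc[OF a, of "i + d"] wi that by simp
    have "Phat a i = P a (Suc (i + d))"
      using window_index(3,4)[OF a, of "i + d"] window_index(3)[OF a, of "Suc (i + d)"] wi that
      by (intro Phat_eqI[OF a]) simp_all
    then show ?thesis
      using rec P_pos[of i a] that by (simp add: Q_def field_simps)
  qed
  then show ?thesis
    using \<open>1 \<le> d\<close> by (intro exI[of _ d] conjI exI[of _ "Suc K"]) auto
qed

theorem mainTheorem2:
  fixes \<alpha> :: real
  assumes "\<alpha> \<ge> 2"
  shows "\<exists>r1 > 1. (\<lambda>n. Q \<alpha> n) \<longlonglongrightarrow> r1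
           \<and> (\<forall>N. \<exists>n\<ge>N. n \<ge> 1 \<and> Q \<alpha> n > r1)
           \<and> (\<forall>N. \<exists>n\<ge>N. n \<ge> 1 \<and> Q \<alpha> n < r1)"
proof -
  obtain d K where "1 \<le> d" "1 \<le> K" and K: "\<forall>i\<ge>K. P \<alpha> (i + d + 1) = P \<alpha> (i + d) + P \<alpha> i
                                          \<and> Q \<alpha> i = 1 + real (P \<alpha> (i + d)) / real (P \<alpha> i)"
    using eventually_lagged_fibonacci[OF assms] by blast
  define u where "u n = P \<alpha> (n + K)" for n
  have Q_u: "Q \<alpha> (n + K) = 1 + real (u (n + d)) / real (u n)" for n
    using K[rule_format, of "n + K"] by (simp add: u_def algebra_simps)
  have "u (n + d + 1) = u (n + d) + u n" for n
    using K[rule_format, of "n + K"] by (simp add: u_def algebra_simps)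
  moreover have "0 < u n" for n
    using P_pos[of "n + K" \<alpha>] \<open>1 \<le> K\<close> by (simp add: u_def)
  ultimately obtain L where "0 < L" and L: "(\<lambda>n. real (u (n + d)) / real (u n)) \<longlonglongrightarrow> L"
    "\<forall>N. \<exists>n\<ge>N. L < real (u (n + d)) / real (u n)" "\<forall>N. \<exists>n\<ge>N. real (u (n + d)) / real (u n) < L"
    using lagged_fibonacci_ratio_oscillates[OF \<open>1 \<le> d\<close>] by blast
  have "(\<lambda>n. Q \<alpha> n) \<longlonglongrightarrow> 1 + L"
    by (rule LIMSEQ_offset[where k = K]) (use tendsto_add[OF tendsto_const L(1), of 1] in \<open>simp add: Q_u\<close>)
  moreover have "\<exists>n\<ge>N. n \<ge> 1 \<and> Q \<alpha> n > 1 + L" "\<exists>n\<ge>N. n \<ge> 1 \<and> Q \<alpha> n < 1 + L" for N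
    using L(2,3)[rule_format, of N] Q_u \<open>1 \<le> K\<close>
    by (metis add_less_cancel_left le_add1 le_add_same_cancel2 order.trans)+
  ultimately show ?thesis
    using \<open>0 < L\<close> by (intro exI[of _ "1 + L"]) auto
qed

end
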